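(* For every $n$ and every $R$, there exists an unweighted directed graph $G$ with $\Theta(n)$ vertices and radius $R$ such that, for any $\epsilon>0$, every subgraph $H$ of $G$ on the same vertex set that is a $(2-\epsilon)$-eccentricity spanner of $G$ contains $\Omega(n^2/R^2)$ edges.
   Context: $d_G(u,v)$ is the directed shortest-path distance, $\mathrm{outecc}_G(x)=\max_y d_G(x,y)$, and $\mathrm{rad}(G)=\min_x\mathrm{outecc}_G(x)$. A subgraph $H=(V,E')$, $E'\subseteq E$, is a $t$-eccentricity spanner of $G$ if $\mathrm{outecc}_H(x)\le t\cdot\mathrm{outecc}_G(x)$ for every vertex $x$. *)

theory Defs
  imports Main "HOL-Library.Extended_Real"
begin

text \<open>The directed shortest-path distance is the least number
of edges of a walk from u to v (infinity if v is unreachable from u).\<close>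

definition dgdist :: "('a \<times> 'a) set \<Rightarrow> 'a \<Rightarrow> 'a \<Rightarrow> enat" where
  "dgdist E u v = (INF k \<in> {k. (u, v) \<in> E ^^ k}. enat k)"

definition outecc :: "'a set \<Rightarrow> ('a \<times> 'a) set \<Rightarrow> 'a \<Rightarrow> enat" where
  "outecc V E x = (SUP y \<in> V. dgdist E x y)"

definition rad :: "'a set \<Rightarrow> ('a \<times> 'a) set \<Rightarrow> enat" where
  "rad V E = (INF x \<in> V. outecc V E x)"

definition ecc_spanner :: "'a set \<Rightarrow> ('a \<times> 'a) set \<Rightarrow> ('a \<times> 'a) set \<Rightarrow> real \<Rightarrow> bool" where
  "ecc_spanner V E E' t \<longleftrightarrow> E' \<subseteq> E \<and>
     (\<forall>x \<in> V. ereal_of_enat (outecc V E' x) \<le> ereal t * ereal_of_enat (outecc V E x))"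

end

theory Submission
  imports Defs "HOL-Library.Countable"
begin

text \<open>The graph has \<open>m = n div R\<close> centres, each with an edge to each of \<open>m\<close> hubs; every hub
carries a leg, a directed path of length \<open>T = R - 1\<close>, and a detour path of length \<open>T\<close> leads from
every centre back to every centre. A centre reaches every vertex within \<open>T + 1\<close> steps, and
potentials that grow by at most one along each edge show that no vertex does better, so the radius
is \<open>R\<close>. If a subgraph omits the edge from centre \<open>i\<close> to hub \<open>j\<close>, centre \<open>i\<close> can reach hub \<open>j\<close>
only through the detour, which puts the end of leg \<open>j\<close> at distance \<open>2R > (2 - \<epsilon>) R\<close>. So a
\<open>(2 - \<epsilon>)\<close>-eccentricity spanner keeps all \<open>m\<^sup>2 = \<Omega>(n\<^sup>2/R\<^sup>2)\<close> centre--hub edges.\<close>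

lemma relpow_map_prod_iff:
  assumes "inj f"
  shows "(f u, f v) \<in> (map_prod f f ` E) ^^ k \<longleftrightarrow> (u, v) \<in> E ^^ k"
proof (induction k arbitrary: v)
  case (Suc k)
  have "(z, f v) \<in> map_prod f f ` E \<longleftrightarrow> (\<exists>y. z = f y \<and> (y, v) \<in> E)" for z
    using assms by (auto dest: injD)
  then show ?case using Suc.IH by (auto simp: relcomp_unfold)
qed (use assms in \<open>auto dest: injD\<close>)

lemma dgdist_map_prod:
  "inj f \<Longrightarrow> dgdist (map_prod f f ` E) (f u) (f v) = dgdist E u v"
  by (simp add: dgdist_def relpow_map_prod_iff)

lemma outecc_map_prod:
  "inj f \<Longrightarrow> outecc (f ` V) (map_prod f f ` E) (f x) = outecc V E x"
  by (simp add: outecc_def dgdist_map_prod image_image)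

lemma rad_map_prod:
  "inj f \<Longrightarrow> rad (f ` V) (map_prod f f ` E) = rad V E"
  by (simp add: rad_def outecc_map_prod image_image)

lemma ecc_spanner_map_prod:
  assumes inj: "inj f" and sp: "ecc_spanner (f ` V) (map_prod f f ` E) E' t"
  obtains E'' where "ecc_spanner V E E'' t" "E' = map_prod f f ` E''"
proof
  let ?E'' = "map_prod f f -` E'"
  have sub: "E' \<subseteq> map_prod f f ` E" using sp by (simp add: ecc_spanner_def)
  then show img: "E' = map_prod f f ` ?E''" by (auto simp: image_vimage_eq)
  have "?E'' \<subseteq> E"
  proof
    fix e assume "e \<in> ?E''"
    then have "map_prod f f e \<in> map_prod f f ` E" using sub by auto
    then show "e \<in> E" using inj by (simp add: inj_image_mem_iff prod.inj_map)
  qed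
  moreover have "\<forall>x\<in>V. ereal_of_enat (outecc V ?E'' x) \<le> ereal t * ereal_of_enat (outecc V E x)"
  proof
    fix x assume "x \<in> V"
    then have "ereal_of_enat (outecc (f ` V) E' (f x))
        \<le> ereal t * ereal_of_enat (outecc (f ` V) (map_prod f f ` E) (f x))"
      using sp by (simp add: ecc_spanner_def)
    then show "ereal_of_enat (outecc V ?E'' x) \<le> ereal t * ereal_of_enat (outecc V E x)"
      using outecc_map_prod[OF inj, of V ?E'' x] img by (simp add: outecc_map_prod[OF inj])
  qed
  ultimately show "ecc_spanner V E ?E'' t" by (simp add: ecc_spanner_def)
qed

lemma relpow_potential_le:
  assumes "\<forall>(u, v) \<in> E. \<phi> v \<le> \<phi> u + (1::nat)" "(u, v) \<in> E ^^ k"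
  shows "\<phi> v \<le> \<phi> u + k"
  using assms(2)
proof (induction k arbitrary: v)
  case (Suc k)
  then obtain y where "(u, y) \<in> E ^^ k" "(y, v) \<in> E" by (blast elim: relpow_Suc_E)
  with Suc.IH assms(1) show ?case by fastforce
qed simp

lemma dgdist_le_relpow: "(u, v) \<in> E ^^ k \<Longrightarrow> dgdist E u v \<le> enat k"
  unfolding dgdist_def by (rule INF_lower) simp

lemma dgdist_ge_potential:
  assumes "\<forall>(u, v) \<in> E. \<phi> v \<le> \<phi> u + (1::nat)"
  shows "enat (\<phi> v - \<phi> u) \<le> dgdist E u v"
  unfolding dgdist_def
proof (rule INF_greatest)
  fix k assume "k \<in> {k. (u, v) \<in> E ^^ k}"
  then have "\<phi> v \<le> \<phi> u + k" using relpow_potential_le[OF assms] by blast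
  then show "enat (\<phi> v - \<phi> u) \<le> enat k" by simp
qed

lemma outecc_ge_potential:
  assumes "\<forall>(u, v) \<in> E. \<phi> v \<le> \<phi> u + (1::nat)" "y \<in> V"
  shows "enat (\<phi> y - \<phi> x) \<le> outecc V E x"
proof -
  have "enat (\<phi> y - \<phi> x) \<le> dgdist E x y" by (rule dgdist_ge_potential[OF assms(1)])
  also have "\<dots> \<le> outecc V E x" unfolding outecc_def using assms(2) by (rule SUP_upper)
  finally show ?thesis .
qed

lemma outecc_le_relpow:
  assumes "\<forall>y \<in> V. \<exists>k \<le> d. (x, y) \<in> E ^^ k"
  shows "outecc V E x \<le> enat d"
  unfolding outecc_def
proof (rule SUP_least)
  fix y assume "y \<in> V"
  then obtain k where "k \<le> d" "(x, y) \<in> E ^^ k" using assms by blast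
  then show "dgdist E x y \<le> enat d"
    by (meson dgdist_le_relpow enat_ord_simps(1) order_trans)
qed

lemma ecc_spanner_outecc_le:
  assumes "ecc_spanner V E E' t" "x \<in> V" "outecc V E x = enat d" "enat e \<le> outecc V E' x"
  shows "real e \<le> t * real d"
proof -
  have "ereal (real e) = ereal_of_enat (enat e)" by simp
  also have "\<dots> \<le> ereal_of_enat (outecc V E' x)" using assms(4) by (simp only: ereal_of_enat_le_iff)
  also have "\<dots> \<le> ereal t * ereal_of_enat (outecc V E x)"
    using assms(1,2) unfolding ecc_spanner_def by blast
  also have "\<dots> = ereal (t * real d)" using assms(3) by simp
  finally show ?thesis by simp
qed

datatype vtx = Centre nat | Hub nat | Detour nat | Leg nat nat

instance vtx :: countable by countable_datatype

definition gadget_vertices :: "nat \<Rightarrow> nat \<Rightarrow> vtx set" where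
  "gadget_vertices m T = Centre ` {..<m} \<union> Hub ` {..<m} \<union> Detour ` {1..T}
     \<union> (\<lambda>(j, s). Leg j s) ` ({..<m} \<times> {1..T})"

text \<open>For \<open>T = 0\<close> the detour is empty and the centres are joined to each other directly.\<close>

definition gadget_edges :: "nat \<Rightarrow> nat \<Rightarrow> (vtx \<times> vtx) set" where
  "gadget_edges m T =
     {(Centre i, Hub j) | i j. i < m \<and> j < m}
   \<union> {(Centre i, Detour 1) | i. i < m \<and> 1 \<le> T}
   \<union> {(Detour t, Detour (Suc t)) | t. 1 \<le> t \<and> t < T}
   \<union> {(Detour T, Centre k) | k. k < m \<and> 1 \<le> T}
   \<union> {(Centre i, Centre k) | i k. i < m \<and> k < m \<and> T = 0}
   \<union> {(Hub j, Leg j 1) | j. j < m \<and> 1 \<le> T}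
   \<union> {(Leg j s, Leg j (Suc s)) | j s. j < m \<and> 1 \<le> s \<and> s < T}"

definition leg_end :: "nat \<Rightarrow> nat \<Rightarrow> vtx" where
  "leg_end T j = (if T = 0 then Hub j else Leg j T)"

definition centre_potential :: "nat \<Rightarrow> vtx \<Rightarrow> nat" where
  "centre_potential T v =
     (case v of Centre _ \<Rightarrow> T + 1 | Detour t \<Rightarrow> t | Hub _ \<Rightarrow> T + 2 | Leg _ s \<Rightarrow> T + 2 + s)"

definition hub_potential :: "nat \<Rightarrow> vtx \<Rightarrow> nat" where
  "hub_potential T v =
     (case v of Centre _ \<Rightarrow> 2 * T + 2 | Detour _ \<Rightarrow> 2 * T + 2 | Hub _ \<Rightarrow> 0 | Leg _ s \<Rightarrow> s)"

definition cut_potential :: "nat \<Rightarrow> nat \<Rightarrow> nat \<Rightarrow> vtx \<Rightarrow> nat" where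
  "cut_potential T i j v =
     (case v of Centre k \<Rightarrow> if k = i then 0 else T + 1 | Detour t \<Rightarrow> t
      | Hub l \<Rightarrow> if l = j then T + 2 else 1 | Leg l s \<Rightarrow> (if l = j then T + 2 else 1) + s)"

lemma centre_potential_edge: "\<forall>(u, v) \<in> gadget_edges m T. centre_potential T v \<le> centre_potential T u + 1"
  by (auto simp: gadget_edges_def centre_potential_def)

lemma hub_potential_edge: "\<forall>(u, v) \<in> gadget_edges m T. hub_potential T v \<le> hub_potential T u + 1"
  by (auto simp: gadget_edges_def hub_potential_def)

lemma cut_potential_edge:
  "\<forall>(u, v) \<in> gadget_edges m T - {(Centre i, Hub j)}. cut_potential T i j v \<le> cut_potential T i j u + 1"
  by (auto simp: gadget_edges_def cut_potential_def split: if_splits)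

lemma gadget_edges_subset: "gadget_edges m T \<subseteq> gadget_vertices m T \<times> gadget_vertices m T"
  by (auto simp: gadget_edges_def gadget_vertices_def)

lemma finite_gadget_vertices: "finite (gadget_vertices m T)"
  by (simp add: gadget_vertices_def)

lemma card_gadget_vertices: "card (gadget_vertices m T) = 2 * m + T + m * T"
proof -
  have "inj_on (\<lambda>(j, s). Leg j s) X" for X by (auto simp: inj_on_def)
  moreover have "inj_on Centre X" "inj_on Hub X" "inj_on Detour X" for X by (auto simp: inj_on_def)
  ultimately show ?thesis unfolding gadget_vertices_def
    by (subst card_Un_disjoint; auto simp: card_Un_disjoint card_image card_cartesian_product)+
qed

lemma leg_end_in_gadget: "j < m \<Longrightarrow> leg_end T j \<in> gadget_vertices m T"
  by (auto simp: leg_end_def gadget_vertices_def)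

lemma centre_potential_leg_end: "centre_potential T (leg_end T j) = 2 * T + 2"
  by (simp add: centre_potential_def leg_end_def)

lemma detour_walk: "1 \<le> t \<Longrightarrow> t \<le> T \<Longrightarrow> i < m \<Longrightarrow> (Centre i, Detour t) \<in> gadget_edges m T ^^ t"
  unfolding relpow_fun_conv
  by (rule exI[of _ "\<lambda>k. if k = 0 then Centre i else Detour k"]) (auto simp: gadget_edges_def)

lemma leg_walk: "1 \<le> s \<Longrightarrow> s \<le> T \<Longrightarrow> j < m \<Longrightarrow> (Hub j, Leg j s) \<in> gadget_edges m T ^^ s"
  unfolding relpow_fun_conv
  by (rule exI[of _ "\<lambda>k. if k = 0 then Hub j else Leg j k"]) (auto simp: gadget_edges_def)

lemma centre_reaches_gadget:
  assumes "i < m" "w \<in> gadget_vertices m T"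
  shows "\<exists>k \<le> T + 1. (Centre i, w) \<in> gadget_edges m T ^^ k"
proof -
  have centre_hub: "(Centre i, Hub j) \<in> gadget_edges m T" if "j < m" for j
    using that assms(1) by (auto simp: gadget_edges_def)
  consider (centre) k where "w = Centre k" "k < m" | (hub) j where "w = Hub j" "j < m"
    | (detour) t where "w = Detour t" "1 \<le> t" "t \<le> T"
    | (leg) j s where "w = Leg j s" "j < m" "1 \<le> s" "s \<le> T"
    using assms(2) unfolding gadget_vertices_def by auto
  then show ?thesis
  proof cases
    case (centre k)
    show ?thesis
    proof (cases "T = 0")
      case True
      then have "(Centre i, w) \<in> gadget_edges m T" using centre assms(1) by (auto simp: gadget_edges_def)
      then show ?thesis using True by (intro exI[of _ 1]) auto
    next
      case False
      then have "(Centre i, Detour T) \<in> gadget_edges m T ^^ T" using detour_walk assms(1) by simp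
      moreover have "(Detour T, w) \<in> gadget_edges m T" using centre False by (auto simp: gadget_edges_def)
      ultimately show ?thesis by (intro exI[of _ "Suc T"]) auto
    qed
  next
    case (hub j)
    then show ?thesis using centre_hub by (intro exI[of _ 1]) auto
  next
    case (detour t)
    then show ?thesis using detour_walk assms(1) by (intro exI[of _ t]) auto
  next
    case (leg j s)
    then have "(Centre i, w) \<in> gadget_edges m T ^^ Suc s"
      using relpow_Suc_I2[OF centre_hub leg_walk] by simp
    then show ?thesis using leg by (intro exI[of _ "Suc s"]) auto
  qed
qed

lemma outecc_gadget_centre:
  assumes "i < m"
  shows "outecc (gadget_vertices m T) (gadget_edges m T) (Centre i) = enat (T + 1)"
proof (rule antisym)
  show "outecc (gadget_vertices m T) (gadget_edges m T) (Centre i) \<le> enat (T + 1)"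
    using centre_reaches_gadget[OF assms] by (intro outecc_le_relpow) blast
  have "enat (centre_potential T (leg_end T i) - centre_potential T (Centre i))
      \<le> outecc (gadget_vertices m T) (gadget_edges m T) (Centre i)"
    by (rule outecc_ge_potential[OF centre_potential_edge leg_end_in_gadget[OF assms]])
  then show "enat (T + 1) \<le> outecc (gadget_vertices m T) (gadget_edges m T) (Centre i)"
    by (simp only: centre_potential_leg_end) (simp add: centre_potential_def)
qed

lemma outecc_gadget_ge:
  assumes "1 \<le> m" "v \<in> gadget_vertices m T"
  shows "enat (T + 1) \<le> outecc (gadget_vertices m T) (gadget_edges m T) v"
proof -
  have centre: "Centre 0 \<in> gadget_vertices m T" and leg_end: "leg_end T 0 \<in> gadget_vertices m T"
    using assms(1) by (auto simp: gadget_vertices_def leg_end_def)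
  consider (centre_side) "\<exists>k. v = Centre k" | (detour) t where "v = Detour t" "t \<le> T"
    | (hub_side) "hub_potential T v \<le> T"
    using assms(2) unfolding gadget_vertices_def hub_potential_def by auto
  then show ?thesis
  proof cases
    case centre_side
    then show ?thesis using assms outecc_gadget_centre by (auto simp: gadget_vertices_def)
  next
    case detour
    have "enat (centre_potential T (leg_end T 0) - centre_potential T v)
        \<le> outecc (gadget_vertices m T) (gadget_edges m T) v"
      by (rule outecc_ge_potential[OF centre_potential_edge leg_end])
    moreover have "T + 1 \<le> centre_potential T (leg_end T 0) - centre_potential T v"
      using detour by (simp only: centre_potential_leg_end) (simp add: centre_potential_def)
    ultimately show ?thesis using enat_ord_simps(1) order_trans by blast
  next
    case hub_side
    have "enat (hub_potential T (Centre 0) - hub_potential T v)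
        \<le> outecc (gadget_vertices m T) (gadget_edges m T) v"
      by (rule outecc_ge_potential[OF hub_potential_edge centre])
    moreover have "T + 1 \<le> hub_potential T (Centre 0) - hub_potential T v"
      using hub_side by (simp add: hub_potential_def)
    ultimately show ?thesis using enat_ord_simps(1) order_trans by blast
  qed
qed

lemma rad_gadget:
  assumes "1 \<le> m"
  shows "rad (gadget_vertices m T) (gadget_edges m T) = enat (T + 1)"
proof (rule antisym)
  have "Centre 0 \<in> gadget_vertices m T" using assms by (simp add: gadget_vertices_def)
  then have "rad (gadget_vertices m T) (gadget_edges m T)
      \<le> outecc (gadget_vertices m T) (gadget_edges m T) (Centre 0)"
    unfolding rad_def by (rule INF_lower)
  then show "rad (gadget_vertices m T) (gadget_edges m T) \<le> enat (T + 1)"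
    using outecc_gadget_centre assms by simp
  show "enat (T + 1) \<le> rad (gadget_vertices m T) (gadget_edges m T)"
    unfolding rad_def using outecc_gadget_ge[OF assms] by (rule INF_greatest)
qed

lemma cut_potential_leg_end: "cut_potential T i j (leg_end T j) = 2 * T + 2"
  by (simp add: cut_potential_def leg_end_def)

lemma gadget_spanner_has_edge:
  assumes "\<epsilon> > 0" and sp: "ecc_spanner (gadget_vertices m T) (gadget_edges m T) E' (2 - \<epsilon>)"
    and "i < m" "j < m"
  shows "(Centre i, Hub j) \<in> E'"
proof (rule ccontr)
  assume "(Centre i, Hub j) \<notin> E'"
  with sp have "E' \<subseteq> gadget_edges m T - {(Centre i, Hub j)}" by (auto simp: ecc_spanner_def)
  then have pot: "\<forall>(u, v) \<in> E'. cut_potential T i j v \<le> cut_potential T i j u + 1"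
    using cut_potential_edge by blast
  have "enat (cut_potential T i j (leg_end T j) - cut_potential T i j (Centre i))
      \<le> outecc (gadget_vertices m T) E' (Centre i)"
    by (rule outecc_ge_potential[OF pot leg_end_in_gadget[OF assms(4)]])
  then have "enat (2 * T + 2) \<le> outecc (gadget_vertices m T) E' (Centre i)"
    by (simp only: cut_potential_leg_end) (simp add: cut_potential_def)
  moreover have "Centre i \<in> gadget_vertices m T" using assms(3) by (simp add: gadget_vertices_def)
  ultimately have "real (2 * T + 2) \<le> (2 - \<epsilon>) * real (T + 1)"
    using ecc_spanner_outecc_le[OF sp _ outecc_gadget_centre[OF assms(3)]] by blast
  then have "\<epsilon> * real (T + 1) \<le> 0" by (simp add: algebra_simps)
  with assms(1) show False by (simp add: mult_le_0_iff)
qed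

lemma card_gadget_spanner:
  assumes "\<epsilon> > 0" "ecc_spanner (gadget_vertices m T) (gadget_edges m T) E' (2 - \<epsilon>)"
  shows "m * m \<le> card E'"
proof -
  let ?S = "(\<lambda>(i, j). (Centre i, Hub j)) ` ({..<m} \<times> {..<m})"
  have "E' \<subseteq> gadget_vertices m T \<times> gadget_vertices m T"
    using assms(2) gadget_edges_subset by (auto simp: ecc_spanner_def)
  then have "finite E'" using finite_gadget_vertices finite_subset by blast
  moreover have "?S \<subseteq> E'" using gadget_spanner_has_edge[OF assms] by auto
  ultimately have "card ?S \<le> card E'" by (simp add: card_mono)
  moreover have "card ?S = m * m"
    by (subst card_image) (auto simp: inj_on_def card_cartesian_product)
  ultimately show ?thesis by simp
qed

lemma div_mult_bounds:
  assumes "1 \<le> R" "R \<le> (n::nat)"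
  shows "n div R * R \<le> n" "n \<le> 2 * (n div R * R)"
proof -
  show "n div R * R \<le> n" by (simp add: times_div_less_eq_dividend)
  obtain q where q: "q = n div R * R" by simp
  have "1 \<le> n div R" using assms by (simp add: Suc_le_eq div_greater_zero_iff)
  then have "R \<le> q" unfolding q by simp
  moreover have "n mod R < R" using assms(1) by simp
  then have "n < q + R" unfolding q by (metis div_mult_mod_eq add_less_cancel_left)
  ultimately show "n \<le> 2 * (n div R * R)" unfolding q by linarith
qed

lemma card_gadget_vertices_bounds:
  assumes "1 \<le> R" "R \<le> n"
  shows "n \<le> 2 * card (gadget_vertices (n div R) (R - 1))"
    and "card (gadget_vertices (n div R) (R - 1)) \<le> 3 * n"
proof -
  obtain m where m: "m = n div R" by simp
  have card: "card (gadget_vertices (n div R) (R - 1)) = m * R + m + (R - 1)"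
    unfolding m using assms(1) by (cases R) (auto simp: card_gadget_vertices algebra_simps)
  have "m * R \<le> n" "n \<le> 2 * (m * R)" unfolding m by (rule div_mult_bounds[OF assms])+
  moreover have "m \<le> n" unfolding m by simp
  ultimately show "n \<le> 2 * card (gadget_vertices (n div R) (R - 1))"
    and "card (gadget_vertices (n div R) (R - 1)) \<le> 3 * n"
    unfolding card using assms by simp_all
qed

lemma square_div_bound:
  assumes "1 \<le> R" "R \<le> n"
  shows "1/4 * (real n)^2 / (real R)^2 \<le> real (n div R * (n div R))"
proof -
  have "real n \<le> 2 * real (n div R) * real R"
    using div_mult_bounds(2)[OF assms] by (metis mult.assoc of_nat_le_iff of_nat_mult of_nat_numeral)
  then have "real n / real R \<le> 2 * real (n div R)" using assms(1) by (simp add: divide_le_eq)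
  then have "(real n / real R)^2 \<le> (2 * real (n div R))^2" by (rule power_mono) simp
  then show ?thesis by (simp add: power_divide power2_eq_square)
qed

theorem theorem1p5:
  shows "\<exists>(V :: nat \<Rightarrow> nat \<Rightarrow> nat set) (E :: nat \<Rightarrow> nat \<Rightarrow> (nat \<times> nat) set) (c1::real) (c2::real).
    0 < c1 \<and> 0 < c2 \<and>
    (\<forall>n R. 1 \<le> R \<and> R \<le> n \<longrightarrow>
        finite (V n R) \<and> E n R \<subseteq> V n R \<times> V n R \<and>
        c1 * real n \<le> real (card (V n R)) \<and> real (card (V n R)) \<le> c2 * real n \<and>
        rad (V n R) (E n R) = enat R) \<and>
    (\<forall>\<epsilon>::real. \<epsilon> > 0 \<longrightarrow> (\<exists>c::real. c > 0 \<and>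
        (\<forall>n R. 1 \<le> R \<and> R \<le> n \<longrightarrow>
          (\<forall>E'. ecc_spanner (V n R) (E n R) E' (2 - \<epsilon>) \<longrightarrow>
              c * (real n)^2 / (real R)^2 \<le> real (card E')))))"
proof -
  define V :: "nat \<Rightarrow> nat \<Rightarrow> nat set"
    where "V n R = to_nat ` gadget_vertices (n div R) (R - 1)" for n R
  define E :: "nat \<Rightarrow> nat \<Rightarrow> (nat \<times> nat) set"
    where "E n R = map_prod to_nat to_nat ` gadget_edges (n div R) (R - 1)" for n R
  have inj: "inj (to_nat :: vtx \<Rightarrow> nat)" by simp
  have graph: "finite (V n R) \<and> E n R \<subseteq> V n R \<times> V n R \<and>
      1/2 * real n \<le> real (card (V n R)) \<and> real (card (V n R)) \<le> 3 * real n \<and>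
      rad (V n R) (E n R) = enat R" if "1 \<le> R \<and> R \<le> n" for n R
  proof -
    have "1 \<le> n div R" using that by (simp add: Suc_le_eq div_greater_zero_iff)
    then have "rad (V n R) (E n R) = enat R"
      using that by (simp add: V_def E_def rad_map_prod[OF inj] rad_gadget)
    moreover have "card (V n R) = card (gadget_vertices (n div R) (R - 1))"
      unfolding V_def using inj by (simp add: card_image inj_on_subset)
    moreover have "E n R \<subseteq> V n R \<times> V n R"
      unfolding V_def E_def using gadget_edges_subset by fastforce
    ultimately show ?thesis
      using card_gadget_vertices_bounds[of R n] that by (simp add: V_def finite_gadget_vertices)
  qed
  have spanner: "1/4 * (real n)^2 / (real R)^2 \<le> real (card E')"
    if \<epsilon>: "\<epsilon> > 0" and nR: "1 \<le> R \<and> R \<le> n" and sp: "ecc_spanner (V n R) (E n R) E' (2 - \<epsilon>)" for \<epsilon> n R E'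
  proof -
    obtain E'' where E'': "ecc_spanner (gadget_vertices (n div R) (R - 1)) (gadget_edges (n div R) (R - 1)) E'' (2 - \<epsilon>)"
      "E' = map_prod to_nat to_nat ` E''"
      by (rule ecc_spanner_map_prod[OF inj sp[unfolded V_def E_def]])
    have "card E' = card E''"
      unfolding E''(2) using prod.inj_map[OF inj inj] by (meson card_image inj_on_subset subset_UNIV)
    then have "n div R * (n div R) \<le> card E'" using card_gadget_spanner[OF \<epsilon> E''(1)] by simp
    then show ?thesis using square_div_bound[of R n] nR by (meson of_nat_le_iff order_trans)
  qed
  have "\<forall>\<epsilon>::real. \<epsilon> > 0 \<longrightarrow> (\<exists>c::real. c > 0 \<and> (\<forall>n R. 1 \<le> R \<and> R \<le> n \<longrightarrow>
      (\<forall>E'. ecc_spanner (V n R) (E n R) E' (2 - \<epsilon>) \<longrightarrow> c * (real n)^2 / (real R)^2 \<le> real (card E'))))"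
    using spanner by (intro allI impI exI[of _ "1/4"]) simp
  with graph show ?thesis by (intro exI[of _ V] exI[of _ E] exI[of _ "1/2"] exI[of _ 3]) simp
qed

end
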